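(* Fix a finite relational vocabulary $\sigma$ and integers $n,d\ge 0$. In the generalized core model structure on $\mathbf{STRUCT}[\sigma_n]_{(d,0)}^{\widetilde{\mathcal{T}(\sigma_n)}}$, any two morphisms $f,g:X\to Y$ with the same domain and the same codomain are homotopic.
   Context: Let $\sigma=\langle R_1,\dots,R_l\rangle$ be a finite relational vocabulary, $R_i$ of arity $p_i$, and $\sigma_n$ its expansion by $n$ constant symbols; all structures are finite. For a $\sigma$-structure $\mathfrak{A}$, its Gaifman graph has vertex set $A$ and an edge between $a,b$ iff both occur in a tuple of some $R_i^{\mathfrak{A}}$; $d(\cdot,\cdot)$ is shortest-path distance, $d(\vec a,b)=\min_i d(a_i,b)$, $B_d^{\mathfrak{A}}(\vec a)=\{b: d(\vec a,b)\le d\}$, and the $d$-neighborhood $N_d^{\mathfrak{A}}(\vec a)$ is the $\sigma_n$-structure on $B_d^{\mathfrak{A}}(\vec a)$ with relations $R_i^{\mathfrak{A}}\cap B_d^{\mathfrak{A}}(\vec a)^{p_i}$ and constants $a_1,\dots,a_n$. Homomorphisms of $d$-neighborhoods are relation-preserving maps of balls sending $a_i\mapsto b_i$. $\widetilde{\mathcal{T}(\sigma_n)}$ is the $\sigma_n$-structure whose universe is the set of closed $\sigma_n$-terms (the constant symbols), constants interpreted as themselves and all relations empty. The category $\mathbf{STRUCT}[\sigma_n]_{(d,0)}^{\widetilde{\mathcal{T}(\sigma_n)}}$ has objects the $d$-neighborhoods $N_d^{\mathfrak{A}}(\vec a)$, the $0$-neighborhoods $N_0^{\mathfrak{A}}(a)$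 and $\widetilde{\mathcal{T}(\sigma_n)}$; morphisms are homomorphisms of $d$-neighborhoods, the unique homomorphism $\widetilde{\mathcal{T}(\sigma_n)}\to N_d^{\mathfrak{A}}(\vec a)$, and the unique homomorphism $N_d^{\mathfrak{A}}(\vec a)\to N_0^{\mathfrak{A}}(a)$. Two objects are homomorphically equivalent if there are morphisms in both directions. The generalized core model structure (of Droz and Zakharevich) is the model structure in which a morphism $f:X\to Y$ is a weak equivalence iff $X$ and $Y$ are homomorphically equivalent, and the acyclic fibrations are exactly the retractions (morphisms $r$ with $r\circ s=\mathrm{id}$ for some $s$); cofibrations are the morphisms with the left lifting property w.r.t. retractions and fibrations those with the right lifting property w.r.t. acyclic cofibrations. "Homotopic" refers to left (equivalently right) homotopy in this model structure. *)

theory Defs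
  imports "HOL-Library.FuncSet"
begin

text \<open>Finite relational vocabulary sigma = list of arities ps (relation symbol R_i has
arity ps ! i, i < length ps).  Structures are represented on the carrier type nat
(every finite structure is isomorphic to one on nat).\<close>

record struc =
  univ :: "nat set"
  rels :: "nat \<Rightarrow> nat list set"
  cs   :: "nat list"

definition sigma_struct :: "nat list \<Rightarrow> struc \<Rightarrow> bool" where
  "sigma_struct ps A \<longleftrightarrow> finite (univ A) \<and> univ A \<noteq> {} \<and>
     (\<forall>i < length ps. rels A i \<subseteq> {t. length t = ps ! i \<and> set t \<subseteq> univ A}) \<and>
     (\<forall>i. length ps \<le> i \<longrightarrow> rels A i = {}) \<and> cs A = []"

definition gedge :: "nat list \<Rightarrow> struc \<Rightarrow> (nat \<times> nat) set" where
  "gedge ps A = {(a, b). \<exists>i < length ps. \<exists>t \<in> rels A i. a \<in> set t \<and> b \<in> set t}"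

definition within :: "nat list \<Rightarrow> struc \<Rightarrow> nat \<Rightarrow> nat \<Rightarrow> nat \<Rightarrow> bool" where
  "within ps A k a b \<longleftrightarrow> (\<exists>j \<le> k. (a, b) \<in> (gedge ps A) ^^ j)"

definition ball :: "nat list \<Rightarrow> struc \<Rightarrow> nat \<Rightarrow> nat list \<Rightarrow> nat set" where
  "ball ps A k as = {b \<in> univ A. \<exists>a \<in> set as. within ps A k a b}"

definition nbhd :: "nat list \<Rightarrow> struc \<Rightarrow> nat \<Rightarrow> nat list \<Rightarrow> struc" where
  "nbhd ps A k as = \<lparr>univ = ball ps A k as,
     rels = (\<lambda>i. {t \<in> rels A i. set t \<subseteq> ball ps A k as}), cs = as\<rparr>"

definition is_nbhd :: "nat list \<Rightarrow> nat \<Rightarrow> nat \<Rightarrow> struc \<Rightarrow> bool" where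
  "is_nbhd ps n k S \<longleftrightarrow> (\<exists>A as. sigma_struct ps A \<and> length as = n \<and> set as \<subseteq> univ A \<and>
       S = nbhd ps A k as)"

text \<open>The term structure: universe = the n constant symbols (coded as 0..n-1),
constants interpreted as themselves, all relations empty.\<close>
definition Tterm :: "nat \<Rightarrow> struc" where
  "Tterm n = \<lparr>univ = {0..<n}, rels = (\<lambda>_. {}), cs = [0..<n]\<rparr>"

text \<open>Objects of the category are tagged: (True, Tterm n) is the term structure,
(False, S) a neighborhood (d-neighborhood or 0-neighborhood).\<close>
type_synonym obj = "bool \<times> struc"

definition Ob :: "nat list \<Rightarrow> nat \<Rightarrow> nat \<Rightarrow> obj \<Rightarrow> bool" where
  "Ob ps n d X \<longleftrightarrow> X = (True, Tterm n) \<or>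
     (\<not> fst X \<and> (is_nbhd ps n d (snd X) \<or> is_nbhd ps n 0 (snd X)))"

definition is_hom :: "struc \<Rightarrow> struc \<Rightarrow> (nat \<Rightarrow> nat) \<Rightarrow> bool" where
  "is_hom S T f \<longleftrightarrow> f \<in> univ S \<rightarrow>\<^sub>E univ T \<and>
     (\<forall>i. \<forall>t \<in> rels S i. map f t \<in> rels T i) \<and> map f (cs S) = cs T"

definition idm :: "obj \<Rightarrow> (nat \<Rightarrow> nat)" where
  "idm X = (\<lambda>x \<in> univ (snd X). x)"

definition cmp :: "obj \<Rightarrow> (nat \<Rightarrow> nat) \<Rightarrow> (nat \<Rightarrow> nat) \<Rightarrow> (nat \<Rightarrow> nat)" where
  "cmp X g f = (\<lambda>x \<in> univ (snd X). g (f x))"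

definition Mor :: "nat list \<Rightarrow> nat \<Rightarrow> nat \<Rightarrow> obj \<Rightarrow> obj \<Rightarrow> (nat \<Rightarrow> nat) \<Rightarrow> bool" where
  "Mor ps n d X Y f \<longleftrightarrow> Ob ps n d X \<and> Ob ps n d Y \<and> is_hom (snd X) (snd Y) f \<and>
     ((X = Y \<and> f = idm X) \<or> fst X \<or>
      (\<not> fst X \<and> \<not> fst Y \<and> is_nbhd ps n d (snd X) \<and>
        (is_nbhd ps n d (snd Y) \<or> is_nbhd ps n 0 (snd Y))))"

definition weq :: "nat list \<Rightarrow> nat \<Rightarrow> nat \<Rightarrow> obj \<Rightarrow> obj \<Rightarrow> (nat \<Rightarrow> nat) \<Rightarrow> bool" where
  "weq ps n d X Y f \<longleftrightarrow> Mor ps n d X Y f \<and> (\<exists>g. Mor ps n d Y X g)"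

definition retraction :: "nat list \<Rightarrow> nat \<Rightarrow> nat \<Rightarrow> obj \<Rightarrow> obj \<Rightarrow> (nat \<Rightarrow> nat) \<Rightarrow> bool" where
  "retraction ps n d X Y r \<longleftrightarrow> Mor ps n d X Y r \<and>
     (\<exists>s. Mor ps n d Y X s \<and> cmp Y r s = idm Y)"

definition cofibration :: "nat list \<Rightarrow> nat \<Rightarrow> nat \<Rightarrow> obj \<Rightarrow> obj \<Rightarrow> (nat \<Rightarrow> nat) \<Rightarrow> bool" where
  "cofibration ps n d A B i \<longleftrightarrow> Mor ps n d A B i \<and>
     (\<forall>E P p u v. retraction ps n d E P p \<and> Mor ps n d A E u \<and> Mor ps n d B P v \<and>
        cmp A p u = cmp A v i \<longrightarrow>
        (\<exists>h. Mor ps n d B E h \<and> cmp A h i = u \<and> cmp B p h = v))"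

definition fibration :: "nat list \<Rightarrow> nat \<Rightarrow> nat \<Rightarrow> obj \<Rightarrow> obj \<Rightarrow> (nat \<Rightarrow> nat) \<Rightarrow> bool" where
  "fibration ps n d E P p \<longleftrightarrow> Mor ps n d E P p \<and>
     (\<forall>A B i u v. cofibration ps n d A B i \<and> weq ps n d A B i \<and> Mor ps n d A E u \<and>
        Mor ps n d B P v \<and> cmp A p u = cmp A v i \<longrightarrow>
        (\<exists>h. Mor ps n d B E h \<and> cmp A h i = u \<and> cmp B p h = v))"

text \<open>The map [i0,i1] : X + X \<rightarrow> C is a cofibration, phrased via the universal property
of the coproduct (left lifting property against all retractions).\<close>
definition pair_cofibration ::
  "nat list \<Rightarrow> nat \<Rightarrow> nat \<Rightarrow> obj \<Rightarrow> obj \<Rightarrow> (nat \<Rightarrow> nat) \<Rightarrow> (nat \<Rightarrow> nat) \<Rightarrow> bool" where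
  "pair_cofibration ps n d X C i0 i1 \<longleftrightarrow> Mor ps n d X C i0 \<and> Mor ps n d X C i1 \<and>
     (\<forall>E P p u0 u1 v. retraction ps n d E P p \<and> Mor ps n d X E u0 \<and> Mor ps n d X E u1 \<and>
        Mor ps n d C P v \<and> cmp X p u0 = cmp X v i0 \<and> cmp X p u1 = cmp X v i1 \<longrightarrow>
        (\<exists>h. Mor ps n d C E h \<and> cmp X h i0 = u0 \<and> cmp X h i1 = u1 \<and> cmp C p h = v))"

text \<open>Left homotopy via a cylinder object (Hovey): X + X \<rightarrow> C cofibration, C \<rightarrow> X weak
equivalence composing to the fold map, and a homotopy H : C \<rightarrow> Y.\<close>
definition left_homotopic ::
  "nat list \<Rightarrow> nat \<Rightarrow> nat \<Rightarrow> obj \<Rightarrow> obj \<Rightarrow> (nat \<Rightarrow> nat) \<Rightarrow> (nat \<Rightarrow> nat) \<Rightarrow> bool" where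
  "left_homotopic ps n d X Y f g \<longleftrightarrow> Mor ps n d X Y f \<and> Mor ps n d X Y g \<and>
     (\<exists>C i0 i1 s H. pair_cofibration ps n d X C i0 i1 \<and> weq ps n d C X s \<and>
        cmp X s i0 = idm X \<and> cmp X s i1 = idm X \<and>
        Mor ps n d C Y H \<and> cmp X H i0 = f \<and> cmp X H i1 = g)"

end

(* If the two injections of a coproduct X + X are jointly surjective, then [i0, i1] is
   an isomorphism and hence a cofibration, the fold map X + X -> X is a weak equivalence
   (split by i0), and [f, g] is a homotopy from f to g; so it suffices to find such a
   coproduct. Out of the term structure, and out of a 0-neighbourhood that is not a
   d-neighbourhood, there is only one morphism into each object, so X itself with
   i0 = i1 = id works. For X = N_d(A, as), take the d-neighbourhood of as in two copies
   of A glued along the constants as: by the ball computation it consists of two copies of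
   X glued along as, and the parity of an element tells a copairing which map to apply. *)

theory Submission
  imports Defs
begin

section \<open>Cylinders from coproducts\<close>

text \<open>Joint surjectivity of the injections stands in for the uniqueness half of the
  universal property.\<close>

definition is_coproduct ::
  "nat list \<Rightarrow> nat \<Rightarrow> nat \<Rightarrow> obj \<Rightarrow> obj \<Rightarrow> (nat \<Rightarrow> nat) \<Rightarrow> (nat \<Rightarrow> nat) \<Rightarrow> bool" where
  "is_coproduct ps n d X C i0 i1 \<longleftrightarrow> Mor ps n d X C i0 \<and> Mor ps n d X C i1 \<and>
     univ (snd C) = i0 ` univ (snd X) \<union> i1 ` univ (snd X) \<and>
     (\<forall>E u0 u1. Mor ps n d X E u0 \<and> Mor ps n d X E u1 \<longrightarrow>
        (\<exists>h. Mor ps n d C E h \<and> cmp X h i0 = u0 \<and> cmp X h i1 = u1))"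

lemma is_hom_extensional: "is_hom S T u \<Longrightarrow> u \<in> extensional (univ S)"
  unfolding is_hom_def by (auto simp: PiE_def)

lemma Mor_extensional: "Mor ps n d X Y u \<Longrightarrow> u \<in> extensional (univ (snd X))"
  unfolding Mor_def by (blast intro: is_hom_extensional)

lemma cmp_apply: "x \<in> univ (snd X) \<Longrightarrow> cmp X g f x = g (f x)"
  by (simp add: cmp_def)

lemma cmp_idm_right: "u \<in> extensional (univ (snd X)) \<Longrightarrow> cmp X u (idm X) = u"
  unfolding cmp_def idm_def by (rule ext) (auto simp: extensional_def)

lemma cmp_eq_on_jointly_surjective:
  assumes C: "univ (snd C) = i0 ` univ (snd X) \<union> i1 ` univ (snd X)"
    and v: "v \<in> extensional (univ (snd C))"
    and h0: "cmp X h i0 = u0" and h1: "cmp X h i1 = u1"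
    and pv0: "cmp X p u0 = cmp X v i0" and pv1: "cmp X p u1 = cmp X v i1"
  shows "cmp C p h = v"
proof (rule extensionalityI[OF _ v])
  show "cmp C p h \<in> extensional (univ (snd C))" by (simp add: cmp_def)
  fix y assume "y \<in> univ (snd C)"
  then obtain x where x: "x \<in> univ (snd X)" and "y = i0 x \<or> y = i1 x" using C by auto
  from this(2) show "cmp C p h y = v y"
  proof
    assume y: "y = i0 x"
    have "cmp C p h y = p (cmp X h i0 x)" using C x y by (auto simp: cmp_def)
    also have "\<dots> = cmp X v i0 x" using x h0 pv0 by (metis cmp_apply)
    finally show ?thesis using x y by (simp add: cmp_def)
  next
    assume y: "y = i1 x"
    have "cmp C p h y = p (cmp X h i1 x)" using C x y by (auto simp: cmp_def)
    also have "\<dots> = cmp X v i1 x" using x h1 pv1 by (metis cmp_apply)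
    finally show ?thesis using x y by (simp add: cmp_def)
  qed
qed

lemma Tterm_idm_hom: "is_hom (Tterm n) (Tterm n) (\<lambda>x \<in> univ (Tterm n). x)"
  unfolding is_hom_def Tterm_def by (auto intro!: map_idI)

lemma map_restrict: "set t \<subseteq> S \<Longrightarrow> map (restrict \<phi> S) t = map \<phi> t"
  by (auto intro: map_cong)

lemma cs_subset_ball: "set as \<subseteq> univ A \<Longrightarrow> set as \<subseteq> ball ps A k as"
  unfolding ball_def within_def by force

lemma nbhd_idm_hom: "set as \<subseteq> univ A \<Longrightarrow>
    is_hom (nbhd ps A k as) (nbhd ps A k as) (\<lambda>x \<in> univ (nbhd ps A k as). x)"
  using cs_subset_ball[of as A ps k]
  unfolding is_hom_def nbhd_def by (auto simp: map_restrict)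

lemma Mor_idm: "Ob ps n d X \<Longrightarrow> Mor ps n d X X (idm X)"
  using Tterm_idm_hom nbhd_idm_hom
  unfolding Mor_def Ob_def is_nbhd_def idm_def by (cases X) auto

lemma left_homotopic_if_coproduct:
  assumes C: "is_coproduct ps n d X C i0 i1"
    and f: "Mor ps n d X Y f" and g: "Mor ps n d X Y g"
  shows "left_homotopic ps n d X Y f g"
proof -
  from C have i0: "Mor ps n d X C i0" and i1: "Mor ps n d X C i1"
    and surj: "univ (snd C) = i0 ` univ (snd X) \<union> i1 ` univ (snd X)"
    and copair: "\<And>E u0 u1. Mor ps n d X E u0 \<Longrightarrow> Mor ps n d X E u1 \<Longrightarrow>
       \<exists>h. Mor ps n d C E h \<and> cmp X h i0 = u0 \<and> cmp X h i1 = u1"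
    unfolding is_coproduct_def by blast+
  have "pair_cofibration ps n d X C i0 i1"
    unfolding pair_cofibration_def
  proof (intro conjI i0 i1 allI impI)
    fix E P p u0 u1 v
    assume "retraction ps n d E P p \<and> Mor ps n d X E u0 \<and> Mor ps n d X E u1 \<and>
        Mor ps n d C P v \<and> cmp X p u0 = cmp X v i0 \<and> cmp X p u1 = cmp X v i1"
    then have u0: "Mor ps n d X E u0" and u1: "Mor ps n d X E u1"
      and v: "v \<in> extensional (univ (snd C))"
      and sq: "cmp X p u0 = cmp X v i0" "cmp X p u1 = cmp X v i1"
      by (auto dest: Mor_extensional)
    obtain h where h: "Mor ps n d C E h" "cmp X h i0 = u0" "cmp X h i1 = u1"
      using copair[OF u0 u1] by blast
    have "cmp C p h = v" using cmp_eq_on_jointly_surjective[OF surj v h(2,3) sq] .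
    then show "\<exists>h. Mor ps n d C E h \<and> cmp X h i0 = u0 \<and> cmp X h i1 = u1 \<and> cmp C p h = v"
      using h by blast
  qed
  moreover obtain s where "Mor ps n d C X s" "cmp X s i0 = idm X" "cmp X s i1 = idm X"
    using copair Mor_idm i0 unfolding Mor_def by blast
  moreover obtain H where "Mor ps n d C Y H" "cmp X H i0 = f" "cmp X H i1 = g"
    using copair[OF f g] by blast
  ultimately show ?thesis
    unfolding left_homotopic_def weq_def using f g i0 by blast
qed

section \<open>Objects with a single morphism into each object\<close>

lemma Tterm_hom_unique:
  assumes "is_hom (Tterm n) E u" "is_hom (Tterm n) E u'"
  shows "u = u'"
proof (rule extensionalityI[OF is_hom_extensional[OF assms(1)] is_hom_extensional[OF assms(2)]])
  fix x assume "x \<in> univ (Tterm n)"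
  moreover have "map u [0..<n] = map u' [0..<n]" using assms unfolding is_hom_def Tterm_def by simp
  ultimately show "u x = u' x" by (simp add: Tterm_def map_eq_conv)
qed

lemma Mor_unique_if_not_nbhd:
  assumes "\<not> (\<not> fst X \<and> is_nbhd ps n d (snd X))"
    and "Mor ps n d X E u" "Mor ps n d X E u'"
  shows "u = u'"
proof (cases "fst X")
  case True
  then have "snd X = Tterm n" using assms(2) unfolding Mor_def Ob_def by auto
  then show ?thesis using Tterm_hom_unique assms(2,3) unfolding Mor_def by metis
next
  case False
  then show ?thesis using assms unfolding Mor_def by auto
qed

lemma is_coproduct_self:
  assumes X: "Ob ps n d X"
    and unique: "\<And>E u u'. Mor ps n d X E u \<Longrightarrow> Mor ps n d X E u' \<Longrightarrow> u = u'"
  shows "is_coproduct ps n d X X (idm X) (idm X)"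
  unfolding is_coproduct_def
proof (intro conjI allI impI Mor_idm[OF X])
  show "univ (snd X) = idm X ` univ (snd X) \<union> idm X ` univ (snd X)"
    by (simp add: idm_def)
  fix E u0 u1 assume "Mor ps n d X E u0 \<and> Mor ps n d X E u1"
  then show "\<exists>h. Mor ps n d X E h \<and> cmp X h (idm X) = u0 \<and> cmp X h (idm X) = u1"
    using unique cmp_idm_right Mor_extensional by metis
qed

section \<open>The amalgamated double of a structure\<close>

lemma relpow_image:
  assumes "\<And>x y. (x, y) \<in> R \<Longrightarrow> (\<phi> x, \<phi> y) \<in> S"
  shows "(x, y) \<in> R ^^ j \<Longrightarrow> (\<phi> x, \<phi> y) \<in> S ^^ j"
proof (induction j arbitrary: y)
  case (Suc j)
  then obtain z where "(x, z) \<in> R ^^ j" "(z, y) \<in> R" by auto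
  then show ?case using Suc.IH assms by auto
qed simp

lemma within_image:
  assumes "\<And>i t. t \<in> rels A i \<Longrightarrow> map \<phi> t \<in> rels B i"
  shows "within ps A k x y \<Longrightarrow> within ps B k (\<phi> x) (\<phi> y)"
proof -
  have "(\<phi> a, \<phi> b) \<in> gedge ps B" if ab: "(a, b) \<in> gedge ps A" for a b
  proof -
    obtain i t where "i < length ps" "t \<in> rels A i" "a \<in> set t" "b \<in> set t"
      using ab unfolding gedge_def by auto
    then show ?thesis using assms unfolding gedge_def by force
  qed
  then show "within ps A k x y \<Longrightarrow> within ps B k (\<phi> x) (\<phi> y)"
    unfolding within_def using relpow_image by metis
qed

lemma ball_image:
  assumes "\<phi> ` univ A \<subseteq> univ B" "\<And>i t. t \<in> rels A i \<Longrightarrow> map \<phi> t \<in> rels B i"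
  shows "\<phi> ` ball ps A k as \<subseteq> ball ps B k (map \<phi> as)"
  using assms within_image[of A \<phi> B] unfolding ball_def by fastforce

lemma is_hom_nbhd_restrict:
  assumes "\<phi> ` univ A \<subseteq> univ B" "\<And>i t. t \<in> rels A i \<Longrightarrow> map \<phi> t \<in> rels B i"
    and "set as \<subseteq> univ A"
  shows "is_hom (nbhd ps A k as) (nbhd ps B k (map \<phi> as)) (restrict \<phi> (ball ps A k as))"
  using ball_image[OF assms(1,2), of ps k as, unfolded image_subset_iff] assms(2) cs_subset_ball[OF assms(3), of ps k]
  unfolding is_hom_def nbhd_def by (auto simp: map_restrict)

text \<open>The sum of two copies of \<open>A\<close> amalgamated along the constants \<open>as\<close>: the first copy
  lives on the even numbers, the second one on the odd numbers except at the constants,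
  where it is identified with the first.\<close>

definition copy0 :: "nat \<Rightarrow> nat" where
  "copy0 x = 2 * x"

definition copy1 :: "nat list \<Rightarrow> nat \<Rightarrow> nat" where
  "copy1 as x = (if x \<in> set as then 2 * x else Suc (2 * x))"

definition amalg :: "struc \<Rightarrow> nat list \<Rightarrow> struc" where
  "amalg A as = \<lparr>univ = copy0 ` univ A \<union> copy1 as ` univ A,
     rels = (\<lambda>i. map copy0 ` rels A i \<union> map (copy1 as) ` rels A i), cs = []\<rparr>"

lemma copy0_div2 [simp]: "copy0 x div 2 = x"
  by (simp add: copy0_def)

lemma copy1_div2 [simp]: "copy1 as x div 2 = x"
  by (simp add: copy1_def)

lemma even_copy0 [simp]: "even (copy0 x)"
  by (simp add: copy0_def)

lemma even_copy1 [simp]: "even (copy1 as x) \<longleftrightarrow> x \<in> set as"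
  by (simp add: copy1_def)

lemma map_copy1_consts: "map (copy1 as) as = map copy0 as"
  by (simp add: copy0_def copy1_def)

lemma sigma_struct_amalg: "sigma_struct ps A \<Longrightarrow> sigma_struct ps (amalg A as)"
  unfolding sigma_struct_def amalg_def by fastforce

lemma map_div2_rels_amalg: "t \<in> rels (amalg A as) i \<Longrightarrow> map (\<lambda>y. y div 2) t \<in> rels A i"
  by (auto simp: amalg_def comp_def)

lemma div2_ball_amalg:
  "(\<lambda>y. y div 2) ` ball ps (amalg A as) k (map copy0 as) \<subseteq> ball ps A k as"
  using ball_image[of "\<lambda>y. y div 2" "amalg A as" A, OF _ map_div2_rels_amalg]
  by (force simp: amalg_def comp_def)

lemma ball_amalg:
  assumes "set as \<subseteq> univ A"
  shows "ball ps (amalg A as) k (map copy0 as) = copy0 ` ball ps A k as \<union> copy1 as ` ball ps A k as"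
    (is "?L = ?R")
proof
  show "?L \<subseteq> ?R"
  proof
    fix y assume y: "y \<in> ?L"
    then have "y div 2 \<in> ball ps A k as" using div2_ball_amalg by blast
    moreover have "y = copy0 (y div 2) \<or> y = copy1 as (y div 2)"
      using y by (auto simp: ball_def amalg_def)
    ultimately show "y \<in> ?R" by (metis UnI1 UnI2 image_eqI)
  qed
next
  have "copy0 ` ball ps A k as \<subseteq> ?L"
    using ball_image[of copy0 A "amalg A as"] by (auto simp: amalg_def)
  moreover have "copy1 as ` ball ps A k as \<subseteq> ?L"
    using ball_image[of "copy1 as" A "amalg A as" ps k as] by (auto simp: amalg_def map_copy1_consts)
  ultimately show "?R \<subseteq> ?L" by blast
qed

lemma is_nbhd_amalg:
  assumes "sigma_struct ps A" "length as = n" "set as \<subseteq> univ A"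
  shows "is_nbhd ps n k (nbhd ps (amalg A as) k (map copy0 as))"
  unfolding is_nbhd_def using assms sigma_struct_amalg[OF assms(1)]
  by (intro exI[of _ "amalg A as"] exI[of _ "map copy0 as"]) (auto simp: amalg_def)

definition copair :: "nat set \<Rightarrow> (nat \<Rightarrow> nat) \<Rightarrow> (nat \<Rightarrow> nat) \<Rightarrow> nat \<Rightarrow> nat" where
  "copair S u0 u1 = (\<lambda>y \<in> S. if even y then u0 (y div 2) else u1 (y div 2))"

lemma copair_copy0: "copy0 x \<in> S \<Longrightarrow> copair S u0 u1 (copy0 x) = u0 x"
  by (simp add: copair_def)

lemma copair_copy1:
  "copy1 as x \<in> S \<Longrightarrow> map u0 as = map u1 as \<Longrightarrow> copair S u0 u1 (copy1 as x) = u1 x"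
  by (auto simp: copair_def map_eq_conv)

lemma is_hom_copair:
  assumes as: "set as \<subseteq> univ A"
    and h0: "is_hom (nbhd ps A k as) T u0" and h1: "is_hom (nbhd ps A k as) T u1"
  defines "V \<equiv> ball ps (amalg A as) k (map copy0 as)"
  shows "is_hom (nbhd ps (amalg A as) k (map copy0 as)) T (copair V u0 u1)"
proof -
  let ?U = "ball ps A k as"
  have agree: "map u0 as = map u1 as" using h0 h1 unfolding is_hom_def nbhd_def by simp
  have V: "V = copy0 ` ?U \<union> copy1 as ` ?U" unfolding V_def using ball_amalg[OF as] .
  have on0: "copair V u0 u1 (copy0 x) = u0 x" if "x \<in> ?U" for x
    using that V by (simp add: copair_copy0)
  have on1: "copair V u0 u1 (copy1 as x) = u1 x" if "x \<in> ?U" for x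
    using that V agree by (simp add: copair_copy1)
  have U: "y div 2 \<in> ?U" if "y \<in> V" for y
    using that div2_ball_amalg unfolding V_def by blast
  have "copair V u0 u1 \<in> V \<rightarrow>\<^sub>E univ T"
    using h0 h1 on0 on1 V unfolding is_hom_def nbhd_def by (auto simp: copair_def)
  moreover have "map (copair V u0 u1) t \<in> rels T i"
    if t: "t \<in> rels (amalg A as) i" "set t \<subseteq> V" for i t
  proof -
    obtain t' where t': "t' \<in> rels A i" "t = map copy0 t' \<or> t = map (copy1 as) t'"
      using t(1) by (auto simp: amalg_def)
    then have "set t' \<subseteq> ?U" using t(2) U by fastforce
    then have "t' \<in> rels (nbhd ps A k as) i" using t'(1) by (simp add: nbhd_def)
    then show ?thesis
      using t'(2) h0 h1 on0 on1 \<open>set t' \<subseteq> ?U\<close> unfolding is_hom_def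
      by (auto simp: subset_iff cong: map_cong)
  qed
  moreover have "map (copair V u0 u1) (map copy0 as) = map u0 as"
    using on0 cs_subset_ball[OF as, of ps k] by (auto intro: map_cong)
  moreover have "map u0 as = cs T" using h0 unfolding is_hom_def nbhd_def by simp
  ultimately show ?thesis unfolding is_hom_def by (simp add: nbhd_def V_def)
qed

lemma Mor_from_nbhd_iff:
  "is_nbhd ps n d S \<Longrightarrow>
    Mor ps n d (False, S) E u \<longleftrightarrow> Ob ps n d E \<and> \<not> fst E \<and> is_hom S (snd E) u"
  unfolding Mor_def Ob_def by auto

lemma is_coproduct_nbhd_amalg:
  assumes A: "sigma_struct ps A" "length as = n" and as: "set as \<subseteq> univ A"
  shows "is_coproduct ps n d (False, nbhd ps A d as) (False, nbhd ps (amalg A as) d (map copy0 as))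
    (restrict copy0 (ball ps A d as)) (restrict (copy1 as) (ball ps A d as))"
    (is "is_coproduct ps n d ?X ?C ?i0 ?i1")
proof -
  let ?U = "ball ps A d as" and ?V = "ball ps (amalg A as) d (map copy0 as)"
  have X: "is_nbhd ps n d (snd ?X)" using A as unfolding is_nbhd_def by auto
  have C: "is_nbhd ps n d (snd ?C)" using is_nbhd_amalg[OF A as] by simp
  have "is_hom (snd ?X) (snd ?C) ?i0"
    using is_hom_nbhd_restrict[of copy0 A "amalg A as", OF _ _ as] by (auto simp: amalg_def)
  then have i0: "Mor ps n d ?X ?C ?i0" using Mor_from_nbhd_iff[OF X] C by (simp add: Ob_def)
  have "is_hom (snd ?X) (snd ?C) ?i1"
    using is_hom_nbhd_restrict[of "copy1 as" A "amalg A as", OF _ _ as]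
    by (auto simp: amalg_def map_copy1_consts)
  then have i1: "Mor ps n d ?X ?C ?i1" using Mor_from_nbhd_iff[OF X] C by (simp add: Ob_def)
  have surj: "univ (snd ?C) = ?i0 ` univ (snd ?X) \<union> ?i1 ` univ (snd ?X)"
    using ball_amalg[OF as] by (simp add: nbhd_def)
  have "\<exists>h. Mor ps n d ?C E h \<and> cmp ?X h ?i0 = u0 \<and> cmp ?X h ?i1 = u1"
    if u0: "Mor ps n d ?X E u0" and u1: "Mor ps n d ?X E u1" for E u0 u1
  proof (intro exI conjI)
    have h0: "is_hom (nbhd ps A d as) (snd E) u0" and h1: "is_hom (nbhd ps A d as) (snd E) u1"
      using u0 u1 Mor_from_nbhd_iff[OF X] by simp_all
    show "Mor ps n d ?C E (copair ?V u0 u1)"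
      using Mor_from_nbhd_iff[OF C] Mor_from_nbhd_iff[OF X] u0 is_hom_copair[OF as h0 h1] by simp
    have agree: "map u0 as = map u1 as" using h0 h1 unfolding is_hom_def nbhd_def by simp
    show "cmp ?X (copair ?V u0 u1) ?i0 = u0" "cmp ?X (copair ?V u0 u1) ?i1 = u1"
      using ball_amalg[OF as] is_hom_extensional[OF h0] is_hom_extensional[OF h1] agree
      by (auto simp: cmp_def nbhd_def copair_copy0 copair_copy1 extensional_def)
  qed
  then show ?thesis using i0 i1 surj unfolding is_coproduct_def by blast
qed

theorem proposition10:
  fixes ps :: "nat list" and n d :: nat and X Y :: obj and f g :: "nat \<Rightarrow> nat"
  assumes "Mor ps n d X Y f" and "Mor ps n d X Y g"
  shows "left_homotopic ps n d X Y f g"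
proof (cases "\<not> fst X \<and> is_nbhd ps n d (snd X)")
  case True
  then obtain A as where A: "sigma_struct ps A" "length as = n" "set as \<subseteq> univ A"
    and X: "X = (False, nbhd ps A d as)"
    unfolding is_nbhd_def by (metis prod.collapse)
  show ?thesis
    using left_homotopic_if_coproduct[OF is_coproduct_nbhd_amalg[OF A]] assms unfolding X .
next
  case False
  have "Ob ps n d X" using assms(1) unfolding Mor_def by blast
  then show ?thesis
    using left_homotopic_if_coproduct[OF is_coproduct_self] Mor_unique_if_not_nbhd[OF False] assms
    by blast
qed

end
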